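(* Assume Assumption A(c),(d), let $x^\star$ be the weak-Minty solution of A(d), and suppose the iterates of (VrFRBS) use estimators $\widetilde S^k$ in class (U) with parameters $\kappa,\Theta,\hat\Theta,\{\delta_k\},\{\Delta_k\}$. For $\gamma>0$ define $$\mathcal P_k:=\|y^k-x^\star\|^2+(1-\gamma\eta)\|y^k-x^{k-1}\|^2+\tfrac{2\eta^2(1-\kappa)}{\kappa}\Delta_{k-1}+\tfrac{2\eta^2\hat\Theta}{\kappa}\|x^{k-1}-x^{k-2}\|^2 .$$ Then for any $c>0$ and all $k\ge0$, almost surely, $$\mathbb E_k[\mathcal P_{k+1}]\le\mathcal P_k-\Big[1-\tfrac{4\rho}{\eta}-2L^2\eta\big(4\rho+\tfrac1\gamma+c\big)\Big]\|y^k-x^k\|^2-\Big[1-\gamma\eta-2L^2\eta\big(4\rho+\tfrac1\gamma+c\big)\Big]\|y^k-x^{k-1}\|^2-\tfrac{\eta[c\kappa L^2-2\eta(\Theta+\hat\Theta)]}{\kappa}\|x^k-x^{k-1}\|^2+\tfrac{2\eta^2\delta_k}{\kappa}.$$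
   Context: Setting: $G:\mathbb{R}^p\to\mathbb{R}^p$, $T:\mathbb{R}^p\rightrightarrows\mathbb{R}^p$, $\Phi:=G+T$, $\mathrm{zer}\,\Phi:=\{x:0\in Gx+Tx\}$, $J_{\eta T}:=(\mathbb{I}+\eta T)^{-1}$; either (E) $Gx=\mathbb{E}_{\zeta\sim\mathbb P}[\mathbf G(x,\zeta)]$ or (F) $Gx=\frac1n\sum_{i=1}^nG_ix$. Assumption A: (a) $\mathrm{zer}\,\Phi\neq\emptyset$; (b) in (E), $\mathbb{E}_\zeta\|\mathbf G(x,\zeta)-Gx\|^2\le\sigma^2$; (c) in (E), $\mathbb{E}_\zeta\|\mathbf G(x,\zeta)-\mathbf G(y,\zeta)\|^2\le L^2\|x-y\|^2$, in (F), $\frac1n\sum_i\|G_ix-G_iy\|^2\le L^2\|x-y\|^2$ (so $G$ is $L$-Lipschitz); (d) there exist $\rho\ge0$ and $x^\star\in\mathrm{zer}\,\Phi$ with $\langle Gx+v,x-x^\star\rangle\ge-\rho\|Gx+v\|^2$ for all $(x,v)\in\mathrm{gra}\,T$. Scheme (VrFRBS): stepsize $\eta>0$, $x^0$, $x^{-2}=x^{-1}=x^0$, $\xi^0\in Tx^0$; for $k\ge0$: $S^k:=2Gx^k-Gx^{k-1}$, estimator $\widetilde S^k$, $x^{k+1}\in J_{\eta T}(x^k-\eta\widetilde S^k)$, $\xi^{k+1}:=\eta^{-1}(x^k-\eta\widetilde S^k-x^{k+1})\in Tx^{k+1}$. Notation: $e^k:=\widetilde S^k-S^k$, $w^k:=Gx^k+\xi^k$,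 $\hat w^k:=Gx^{k-1}+\xi^k$, $y^k:=x^k+\eta\hat w^k$. $\mathcal F_k$: $\sigma$-algebra of all randomness up to iteration $k$ (so $x^j,\xi^j$, $j\le k$, hence $w^k,y^k$, are $\mathcal F_k$-measurable); $\mathbb E_k[\cdot]:=\mathbb E[\cdot\mid\mathcal F_k]$. Class (U): there exist nonnegative random variables $\Delta_k$ ($\Delta_{-1}:=0$), $\kappa\in(0,1]$, $\Theta,\hat\Theta\ge0$, nonnegative $\{\delta_k\}$ with a.s. for all $k\ge0$: $\mathbb E_k[e^k]=0$; $\mathbb E_k\|e^k\|^2\le\mathbb E_k[\Delta_k]$; $\mathbb E_k[\Delta_k]\le(1-\kappa)\Delta_{k-1}+\Theta\|x^k-x^{k-1}\|^2+\hat\Theta\|x^{k-1}-x^{k-2}\|^2+\delta_k$. *)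

theory Defs
  imports "HOL-Probability.Probability"
begin

definition assmAc_E :: "'z measure \<Rightarrow> ('v::euclidean_space \<Rightarrow> 'z \<Rightarrow> 'v) \<Rightarrow> ('v \<Rightarrow> 'v) \<Rightarrow> real \<Rightarrow> bool" where
  "assmAc_E P Gz G L \<longleftrightarrow> prob_space P \<and>
     (\<forall>x. integrable P (Gz x) \<and> G x = (\<integral>\<zeta>. Gz x \<zeta> \<partial>P)) \<and>
     (\<forall>x y. integrable P (\<lambda>\<zeta>. (norm (Gz x \<zeta> - Gz y \<zeta>))\<^sup>2) \<and>
            (\<integral>\<zeta>. (norm (Gz x \<zeta> - Gz y \<zeta>))\<^sup>2 \<partial>P) \<le> L\<^sup>2 * (norm (x - y))\<^sup>2)"

definition assmAc_F :: "nat \<Rightarrow> (nat \<Rightarrow> 'v::euclidean_space \<Rightarrow> 'v) \<Rightarrow> ('v \<Rightarrow> 'v) \<Rightarrow> real \<Rightarrow> bool" where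
  "assmAc_F n Gi G L \<longleftrightarrow> n \<ge> 1 \<and>
     (\<forall>x. G x = (1 / real n) *\<^sub>R (\<Sum>i<n. Gi i x)) \<and>
     (\<forall>x y. (1 / real n) * (\<Sum>i<n. (norm (Gi i x - Gi i y))\<^sup>2) \<le> L\<^sup>2 * (norm (x - y))\<^sup>2)"

definition weak_minty :: "('v::euclidean_space \<Rightarrow> 'v) \<Rightarrow> ('v \<Rightarrow> 'v set) \<Rightarrow> real \<Rightarrow> 'v \<Rightarrow> bool" where
  "weak_minty G T \<rho> xs \<longleftrightarrow> \<rho> \<ge> 0 \<and> 0 \<in> (\<lambda>v. G xs + v) ` T xs \<and>
     (\<forall>x v. v \<in> T x \<longrightarrow> inner (G x + v) (x - xs) \<ge> - \<rho> * (norm (G x + v))\<^sup>2)"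

definition subalg_filtration :: "'a measure \<Rightarrow> (nat \<Rightarrow> 'a measure) \<Rightarrow> bool" where
  "subalg_filtration M F \<longleftrightarrow> (\<forall>k. subalgebra M (F k)) \<and> (\<forall>k. sets (F k) \<subseteq> sets (F (Suc k)))"

definition Dprev :: "(nat \<Rightarrow> 'a \<Rightarrow> real) \<Rightarrow> nat \<Rightarrow> 'a \<Rightarrow> real" where
  "Dprev \<Delta> k \<omega> = (if k = 0 then 0 else \<Delta> (k - 1) \<omega>)"

text \<open>\<open>y^k = x^k + \<eta> (G x^{k-1} + \<xi>^k)\<close>, with \<open>x^{-1} = x^0\<close> (natural subtraction).\<close>
definition yseq :: "('v::euclidean_space \<Rightarrow> 'v) \<Rightarrow> real \<Rightarrow> (nat \<Rightarrow> 'a \<Rightarrow> 'v) \<Rightarrow> (nat \<Rightarrow> 'a \<Rightarrow> 'v) \<Rightarrow> nat \<Rightarrow> 'a \<Rightarrow> 'v" where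
  "yseq G \<eta> x \<xi> k \<omega> = x k \<omega> + \<eta> *\<^sub>R (G (x (k - 1) \<omega>) + \<xi> k \<omega>)"

definition Pk :: "('v::euclidean_space \<Rightarrow> 'v) \<Rightarrow> real \<Rightarrow> real \<Rightarrow> real \<Rightarrow> real \<Rightarrow> 'v \<Rightarrow>
    (nat \<Rightarrow> 'a \<Rightarrow> 'v) \<Rightarrow> (nat \<Rightarrow> 'a \<Rightarrow> 'v) \<Rightarrow> (nat \<Rightarrow> 'a \<Rightarrow> real) \<Rightarrow> nat \<Rightarrow> 'a \<Rightarrow> real" where
  "Pk G \<eta> \<gamma> \<kappa> \<Theta>h xs x \<xi> \<Delta> k \<omega> =
     (norm (yseq G \<eta> x \<xi> k \<omega> - xs))\<^sup>2
     + (1 - \<gamma> * \<eta>) * (norm (yseq G \<eta> x \<xi> k \<omega> - x (k - 1) \<omega>))\<^sup>2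
     + 2 * \<eta>\<^sup>2 * (1 - \<kappa>) / \<kappa> * Dprev \<Delta> k \<omega>
     + 2 * \<eta>\<^sup>2 * \<Theta>h / \<kappa> * (norm (x (k - 1) \<omega> - x (k - 2) \<omega>))\<^sup>2"

end

theory Submission
  imports Defs
begin

(* Write g = G x^k - G x^(k-1) and e^k for the estimator error. The update gives
   y^(k+1) = x^k - eta g - eta e^k, so both squared distances in P_(k+1) are of the form
   |u - eta e^k|^2 with u known at time k; unbiasedness kills the cross term and the noise enters
   only through eta^2 E_k|e^k|^2 <= eta^2 E_k[Delta_k], which the recursion of class (U) turns into
   the Delta- and |x^(k-1) - x^(k-2)|-terms of P_k (this is what the weights 2 eta^2 (1-kappa)/kappa
   and 2 eta^2 Theta_hat/kappa are chosen for). The deterministic part is a forward-reflected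
   descent step: since x^k - eta g = y^k - eta w^k, expanding |y^k - eta w^k - x*|^2 and using the
   weak Minty inequality at (x^k, xi^k) leaves |y^k - x*|^2 - (1 - 4 rho/eta)|y^k - x^k|^2 plus
   multiples of |g|^2 <= L^2 |x^k - x^(k-1)|^2, and the latter is split by
   |x^k - x^(k-1)|^2 <= 2|y^k - x^k|^2 + 2|y^k - x^(k-1)|^2. *)

section \<open>Lipschitz continuity under Assumption A(c)\<close>

lemma lipschitz_on_UNIV_of_sq_bound:
  fixes G :: "'a::real_normed_vector \<Rightarrow> 'b::real_normed_vector"
  assumes "\<And>x y. (norm (G x - G y))\<^sup>2 \<le> L\<^sup>2 * (norm (x - y))\<^sup>2"
  shows "\<bar>L\<bar>-lipschitz_on UNIV G"
proof (rule lipschitz_onI)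
  fix x y
  have "(norm (G x - G y))\<^sup>2 \<le> (\<bar>L\<bar> * norm (x - y))\<^sup>2"
    using assms[of x y] by (simp add: power_mult_distrib)
  then show "dist (G x) (G y) \<le> \<bar>L\<bar> * dist x y"
    unfolding dist_norm by (rule power2_le_imp_le) simp
qed simp

lemma assmAc_E_lipschitz:
  assumes "assmAc_E P Gz G L"
  shows "\<bar>L\<bar>-lipschitz_on UNIV G"
proof (rule lipschitz_on_UNIV_of_sq_bound)
  fix x y
  interpret prob_space P using assms unfolding assmAc_E_def by auto
  have ix: "integrable P (Gz x)" and iy: "integrable P (Gz y)"
    and gx: "G x = (\<integral>\<zeta>. Gz x \<zeta> \<partial>P)" and gy: "G y = (\<integral>\<zeta>. Gz y \<zeta> \<partial>P)"
    and i2: "integrable P (\<lambda>\<zeta>. (norm (Gz x \<zeta> - Gz y \<zeta>))\<^sup>2)"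
    and b2: "(\<integral>\<zeta>. (norm (Gz x \<zeta> - Gz y \<zeta>))\<^sup>2 \<partial>P) \<le> L\<^sup>2 * (norm (x - y))\<^sup>2"
    using assms unfolding assmAc_E_def by auto
  define h where "h \<zeta> = norm (Gz x \<zeta> - Gz y \<zeta>)" for \<zeta>
  have h_sq: "integrable P (\<lambda>\<zeta>. (h \<zeta>)\<^sup>2)" using i2 unfolding h_def .
  have h_int: "integrable P h"
    by (rule square_integrable_imp_integrable[OF _ h_sq]) (use ix iy in \<open>simp add: h_def\<close>)
  have "norm (G x - G y) \<le> (\<integral>\<zeta>. h \<zeta> \<partial>P)"
    unfolding gx gy h_def using ix iy by (simp flip: Bochner_Integration.integral_diff)
  then have "(norm (G x - G y))\<^sup>2 \<le> (\<integral>\<zeta>. h \<zeta> \<partial>P)\<^sup>2"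
    by (simp add: power_mono)
  also have "\<dots> \<le> (\<integral>\<zeta>. (h \<zeta>)\<^sup>2 \<partial>P)"
    using variance_positive[of h] variance_eq[OF h_int h_sq] by simp
  finally show "(norm (G x - G y))\<^sup>2 \<le> L\<^sup>2 * (norm (x - y))\<^sup>2"
    using b2 unfolding h_def by simp
qed

lemma assmAc_F_lipschitz:
  assumes "assmAc_F n Gi G L"
  shows "\<bar>L\<bar>-lipschitz_on UNIV G"
proof (rule lipschitz_on_UNIV_of_sq_bound)
  fix x y
  have n: "n \<ge> 1" and G: "\<And>x. G x = (1 / real n) *\<^sub>R (\<Sum>i<n. Gi i x)"
    and bound: "(1 / real n) * (\<Sum>i<n. (norm (Gi i x - Gi i y))\<^sup>2) \<le> L\<^sup>2 * (norm (x - y))\<^sup>2"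
    using assms unfolding assmAc_F_def by auto
  define h where "h i = norm (Gi i x - Gi i y)" for i
  have "norm (G x - G y) = (1 / real n) * norm (\<Sum>i<n. Gi i x - Gi i y)"
    unfolding G by (simp add: sum_subtractf flip: scaleR_diff_right)
  also have "\<dots> \<le> (1 / real n) * (\<Sum>i<n. h i)"
    unfolding h_def by (intro mult_left_mono norm_sum) auto
  finally have "(norm (G x - G y))\<^sup>2 \<le> (1 / real n)\<^sup>2 * (\<Sum>i<n. h i)\<^sup>2"
    by (simp add: power_mono flip: power_mult_distrib)
  also have "\<dots> \<le> (1 / real n)\<^sup>2 * ((\<Sum>i<n. (h i)\<^sup>2) * real n)"
    using sum_squared_le_sum_of_squares[of h "{..<n}"] by (intro mult_left_mono) auto
  also have "\<dots> = (1 / real n) * (\<Sum>i<n. (h i)\<^sup>2)"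
    using n by (simp add: power2_eq_square)
  finally show "(norm (G x - G y))\<^sup>2 \<le> L\<^sup>2 * (norm (x - y))\<^sup>2"
    using bound unfolding h_def by simp
qed

section \<open>The deterministic descent inequality\<close>

lemma norm_add_sq_le:
  fixes a b :: "'a::real_normed_vector"
  shows "(norm (a + b))\<^sup>2 \<le> 2 * (norm a)\<^sup>2 + 2 * (norm b)\<^sup>2"
proof -
  have "(norm (a + b))\<^sup>2 \<le> (norm a + norm b)\<^sup>2"
    by (simp add: norm_triangle_ineq power_mono)
  also have "\<dots> \<le> 2 * (norm a)\<^sup>2 + 2 * (norm b)\<^sup>2"
    using sum_squares_ge_zero[of "norm a - norm b" 0] by (simp add: power2_eq_square algebra_simps)
  finally show ?thesis .
qed

lemma norm_diff_sq_le:
  fixes a b :: "'a::real_normed_vector"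
  shows "(norm (a - b))\<^sup>2 \<le> 2 * (norm a)\<^sup>2 + 2 * (norm b)\<^sup>2"
  using norm_add_sq_le[of a "- b"] by simp

lemma weak_minty_step_estimate:
  fixes G :: "'v::real_inner \<Rightarrow> 'v"
  assumes minty: "inner (G x + v) (x - xs) \<ge> - \<rho> * (norm (G x + v))\<^sup>2"
    and "\<rho> \<ge> 0" "\<eta> > 0"
    and y: "y = x + \<eta> *\<^sub>R (G x' + v)"
  shows "(norm (x - \<eta> *\<^sub>R (G x - G x') - xs))\<^sup>2
    \<le> (norm (y - xs))\<^sup>2 - (1 - 4 * \<rho> / \<eta>) * (norm (y - x))\<^sup>2 + (\<eta>\<^sup>2 + 4 * \<eta> * \<rho>) * (norm (G x - G x'))\<^sup>2"
proof -
  define p g w where "p = G x' + v" and "g = G x - G x'" and "w = G x + v"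
  have w: "w = p + g" unfolding p_def g_def w_def by simp
  have "x - \<eta> *\<^sub>R g - xs = (y - xs) - \<eta> *\<^sub>R w" and "y - xs = (x - xs) + \<eta> *\<^sub>R p"
    unfolding y p_def g_def w_def by (simp_all add: algebra_simps)
  \<comment> \<open>with \<open>w = p + g\<close>, polarization gives \<open>2 \<langle>w, p\<rangle> = |w|\<^sup>2 + |p|\<^sup>2 - |g|\<^sup>2\<close>\<close>
  then have expand: "(norm (x - \<eta> *\<^sub>R g - xs))\<^sup>2
      = (norm (y - xs))\<^sup>2 - 2 * \<eta> * inner w (x - xs) - \<eta>\<^sup>2 * (norm p)\<^sup>2 + \<eta>\<^sup>2 * (norm g)\<^sup>2"
    unfolding w power2_norm_eq_inner
    by (simp add: inner_add_left inner_add_right inner_diff_left inner_diff_right inner_commute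
        algebra_simps power2_eq_square)
  have "- 2 * \<eta> * inner w (x - xs) \<le> 2 * \<eta> * \<rho> * (norm w)\<^sup>2"
    using mult_left_mono[OF minty, of "2 * \<eta>"] \<open>\<eta> > 0\<close> unfolding w_def by simp
  also have "\<dots> \<le> 2 * \<eta> * \<rho> * (2 * (norm p)\<^sup>2 + 2 * (norm g)\<^sup>2)"
    using norm_add_sq_le[of p g] \<open>\<rho> \<ge> 0\<close> \<open>\<eta> > 0\<close> unfolding w by (intro mult_left_mono) auto
  also have "\<dots> = 4 * \<rho> / \<eta> * (\<eta>\<^sup>2 * (norm p)\<^sup>2) + 4 * \<eta> * \<rho> * (norm g)\<^sup>2"
    using \<open>\<eta> > 0\<close> by (simp add: field_simps power2_eq_square)
  finally have "- 2 * \<eta> * inner w (x - xs) \<le> 4 * \<rho> / \<eta> * (\<eta>\<^sup>2 * (norm p)\<^sup>2) + 4 * \<eta> * \<rho> * (norm g)\<^sup>2" .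
  moreover have "(norm (y - x))\<^sup>2 = \<eta>\<^sup>2 * (norm p)\<^sup>2"
    unfolding y p_def by (simp add: power_mult_distrib)
  ultimately show ?thesis
    unfolding expand g_def[symmetric] by (simp add: algebra_simps)
qed

lemma forward_reflected_descent:
  fixes G :: "'v::real_inner \<Rightarrow> 'v"
  assumes minty: "inner (G x + v) (x - xs) \<ge> - \<rho> * (norm (G x + v))\<^sup>2"
    and lip: "norm (G x - G x') \<le> \<bar>L\<bar> * norm (x - x')"
    and rho: "\<rho> \<ge> 0" and eta: "\<eta> > 0" and gamma: "\<gamma> > 0"
    and y: "y = x + \<eta> *\<^sub>R (G x' + v)"
  shows "(norm (x - \<eta> *\<^sub>R (G x - G x') - xs))\<^sup>2 + (1 - \<gamma> * \<eta>) * (norm (\<eta> *\<^sub>R (G x - G x')))\<^sup>2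
    \<le> (norm (y - xs))\<^sup>2 - (1 - 4 * \<rho> / \<eta>) * (norm (y - x))\<^sup>2
      + \<eta> * (4 * \<rho> + 1 / \<gamma>) * L\<^sup>2 * (norm (x - x'))\<^sup>2"
proof -
  define g2 where "g2 = (norm (G x - G x'))\<^sup>2"
  have g2_le: "g2 \<le> L\<^sup>2 * (norm (x - x'))\<^sup>2"
    using power_mono[OF lip norm_ge_zero, where n = 2] unfolding g2_def by (simp add: power_mult_distrib)
  have "\<gamma> * \<eta> * (2 - \<gamma> * \<eta>) \<le> 1"
    using sum_squares_ge_zero[of "1 - \<gamma> * \<eta>" 0] by (simp add: power2_eq_square algebra_simps)
  then have "\<eta> / \<gamma> * (\<gamma> * \<eta> * (2 - \<gamma> * \<eta>)) \<le> \<eta> / \<gamma> * 1"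
    using eta gamma by (intro mult_left_mono) auto
  then have "\<eta>\<^sup>2 * (2 - \<gamma> * \<eta>) \<le> \<eta> / \<gamma>"
    using gamma by (simp add: power2_eq_square)
  then have "\<eta>\<^sup>2 * (2 - \<gamma> * \<eta>) * g2 \<le> \<eta> / \<gamma> * g2"
    by (rule mult_right_mono) (simp add: g2_def)
  then have "(\<eta>\<^sup>2 + 4 * \<eta> * \<rho>) * g2 + (1 - \<gamma> * \<eta>) * (\<eta>\<^sup>2 * g2) \<le> \<eta> * (4 * \<rho> + 1 / \<gamma>) * g2"
    by (simp add: algebra_simps)
  also have "\<dots> \<le> \<eta> * (4 * \<rho> + 1 / \<gamma>) * L\<^sup>2 * (norm (x - x'))\<^sup>2"
    using mult_left_mono[OF g2_le, of "\<eta> * (4 * \<rho> + 1 / \<gamma>)"] rho eta gamma by (simp add: mult.assoc)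
  finally have tail: "(\<eta>\<^sup>2 + 4 * \<eta> * \<rho>) * g2 + (1 - \<gamma> * \<eta>) * (\<eta>\<^sup>2 * g2)
      \<le> \<eta> * (4 * \<rho> + 1 / \<gamma>) * L\<^sup>2 * (norm (x - x'))\<^sup>2" .
  have "(norm (\<eta> *\<^sub>R (G x - G x')))\<^sup>2 = \<eta>\<^sup>2 * g2"
    unfolding g2_def by (simp add: power_mult_distrib)
  then show ?thesis
    using weak_minty_step_estimate[OF minty rho eta y] tail
    unfolding g2_def by simp
qed

lemma variance_reduction_bound:
  fixes V D Dp d dm \<delta> :: real
  assumes "0 \<le> V" "V \<le> D" and D: "D \<le> (1 - \<kappa>) * Dp + \<Theta> * d + \<Theta>h * dm + \<delta>"
    and "\<kappa> > 0" "\<gamma> > 0" "\<eta> > 0"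
  shows "\<eta>\<^sup>2 * V + (1 - \<gamma> * \<eta>) * (\<eta>\<^sup>2 * V) + 2 * \<eta>\<^sup>2 * (1 - \<kappa>) / \<kappa> * D
    \<le> 2 * \<eta>\<^sup>2 * (1 - \<kappa>) / \<kappa> * Dp + 2 * \<eta>\<^sup>2 / \<kappa> * (\<Theta> * d + \<Theta>h * dm + \<delta>)"
proof -
  have "\<eta>\<^sup>2 * V \<le> \<eta>\<^sup>2 * D" and "0 \<le> \<gamma> * \<eta> * (\<eta>\<^sup>2 * V)"
    using assms by (simp_all add: mult_left_mono)
  then have "\<eta>\<^sup>2 * V + (1 - \<gamma> * \<eta>) * (\<eta>\<^sup>2 * V) + 2 * \<eta>\<^sup>2 * (1 - \<kappa>) / \<kappa> * D
      \<le> 2 * \<eta>\<^sup>2 * D + 2 * \<eta>\<^sup>2 * (1 - \<kappa>) / \<kappa> * D"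
    by (simp add: algebra_simps)
  also have "\<dots> = 2 * \<eta>\<^sup>2 / \<kappa> * D"
    using \<open>\<kappa> > 0\<close> by (simp add: field_simps)
  also have "\<dots> \<le> 2 * \<eta>\<^sup>2 / \<kappa> * ((1 - \<kappa>) * Dp + \<Theta> * d + \<Theta>h * dm + \<delta>)"
    using D \<open>\<kappa> > 0\<close> by (intro mult_left_mono) auto
  also have "\<dots> = 2 * \<eta>\<^sup>2 * (1 - \<kappa>) / \<kappa> * Dp + 2 * \<eta>\<^sup>2 / \<kappa> * (\<Theta> * d + \<Theta>h * dm + \<delta>)"
    using \<open>\<kappa> > 0\<close> by (simp add: field_simps)
  finally show ?thesis .
qed

lemma forward_reflected_lyapunov_decrease:
  fixes G :: "'v::euclidean_space \<Rightarrow> 'v"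
  assumes Ad: "weak_minty G T \<rho> xs" and v: "v \<in> T x" and lip: "\<bar>L\<bar>-lipschitz_on UNIV G"
    and y: "y = x + \<eta> *\<^sub>R (G x' + v)"
    and var: "0 \<le> V" "V \<le> D"
      "D \<le> (1 - \<kappa>) * Dp + \<Theta> * (norm (x - x'))\<^sup>2 + \<Theta>h * (norm (x' - x''))\<^sup>2 + \<delta>"
    and eta: "\<eta> > 0" and gamma: "\<gamma> > 0" and "c > 0" and kappa: "\<kappa> > 0"
  shows "(norm (x - \<eta> *\<^sub>R (G x - G x') - xs))\<^sup>2 + \<eta>\<^sup>2 * V
      + (1 - \<gamma> * \<eta>) * ((norm (\<eta> *\<^sub>R (G x - G x')))\<^sup>2 + \<eta>\<^sup>2 * V)
      + 2 * \<eta>\<^sup>2 * (1 - \<kappa>) / \<kappa> * D + 2 * \<eta>\<^sup>2 * \<Theta>h / \<kappa> * (norm (x - x'))\<^sup>2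
    \<le> (norm (y - xs))\<^sup>2 + (1 - \<gamma> * \<eta>) * (norm (y - x'))\<^sup>2
      + 2 * \<eta>\<^sup>2 * (1 - \<kappa>) / \<kappa> * Dp + 2 * \<eta>\<^sup>2 * \<Theta>h / \<kappa> * (norm (x' - x''))\<^sup>2
      - (1 - 4 * \<rho> / \<eta> - 2 * L\<^sup>2 * \<eta> * (4 * \<rho> + 1 / \<gamma> + c)) * (norm (y - x))\<^sup>2
      - (1 - \<gamma> * \<eta> - 2 * L\<^sup>2 * \<eta> * (4 * \<rho> + 1 / \<gamma> + c)) * (norm (y - x'))\<^sup>2
      - \<eta> * (c * \<kappa> * L\<^sup>2 - 2 * \<eta> * (\<Theta> + \<Theta>h)) / \<kappa> * (norm (x - x'))\<^sup>2
      + 2 * \<eta>\<^sup>2 * \<delta> / \<kappa>"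
proof -
  have minty: "inner (G x + v) (x - xs) \<ge> - \<rho> * (norm (G x + v))\<^sup>2" and "\<rho> \<ge> 0"
    using Ad v unfolding weak_minty_def by auto
  have lip': "norm (G x - G x') \<le> \<bar>L\<bar> * norm (x - x')"
    using lipschitz_onD[OF lip] by (simp add: dist_norm)
  define a b d K where "a = (norm (y - x))\<^sup>2" and "b = (norm (y - x'))\<^sup>2"
    and "d = (norm (x - x'))\<^sup>2" and "K = 4 * \<rho> + 1 / \<gamma> + c"
  have descent: "(norm (x - \<eta> *\<^sub>R (G x - G x') - xs))\<^sup>2 + (1 - \<gamma> * \<eta>) * (norm (\<eta> *\<^sub>R (G x - G x')))\<^sup>2
      \<le> (norm (y - xs))\<^sup>2 - (1 - 4 * \<rho> / \<eta>) * a + \<eta> * (4 * \<rho> + 1 / \<gamma>) * L\<^sup>2 * d"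
    unfolding a_def d_def using forward_reflected_descent[OF minty lip' \<open>\<rho> \<ge> 0\<close> eta gamma y] .
  have variance: "\<eta>\<^sup>2 * V + (1 - \<gamma> * \<eta>) * (\<eta>\<^sup>2 * V) + 2 * \<eta>\<^sup>2 * (1 - \<kappa>) / \<kappa> * D
      \<le> 2 * \<eta>\<^sup>2 * (1 - \<kappa>) / \<kappa> * Dp + 2 * \<eta>\<^sup>2 / \<kappa> * (\<Theta> * d + \<Theta>h * (norm (x' - x''))\<^sup>2 + \<delta>)"
    unfolding d_def using variance_reduction_bound[OF var kappa gamma eta] .
  have "d \<le> 2 * b + 2 * a"
    unfolding a_def b_def d_def using norm_diff_sq_le[of "y - x'" "y - x"] by simp
  moreover have "0 \<le> \<eta> * K * L\<^sup>2"
    using \<open>\<rho> \<ge> 0\<close> eta gamma \<open>c > 0\<close> unfolding K_def by simp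
  ultimately have "\<eta> * K * L\<^sup>2 * d \<le> \<eta> * K * L\<^sup>2 * (2 * b + 2 * a)"
    by (rule mult_left_mono)
  then have "\<eta> * K * L\<^sup>2 * d \<le> 2 * L\<^sup>2 * \<eta> * K * a + 2 * L\<^sup>2 * \<eta> * K * b"
    by (simp add: algebra_simps)
  moreover have "\<eta> * K * L\<^sup>2 * d = \<eta> * (4 * \<rho> + 1 / \<gamma>) * L\<^sup>2 * d + \<eta> * c * L\<^sup>2 * d"
    unfolding K_def by (simp add: algebra_simps)
  moreover have "2 * \<eta>\<^sup>2 / \<kappa> * (\<Theta> * d + \<Theta>h * (norm (x' - x''))\<^sup>2 + \<delta>) + 2 * \<eta>\<^sup>2 * \<Theta>h / \<kappa> * d
      = \<eta> * (2 * \<eta> * (\<Theta> + \<Theta>h)) / \<kappa> * d + 2 * \<eta>\<^sup>2 * \<Theta>h / \<kappa> * (norm (x' - x''))\<^sup>2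
        + 2 * \<eta>\<^sup>2 * \<delta> / \<kappa>"
    using \<open>\<kappa> > 0\<close> by (simp add: field_simps power2_eq_square)
  moreover have "\<eta> * (c * \<kappa> * L\<^sup>2 - 2 * \<eta> * (\<Theta> + \<Theta>h)) / \<kappa> * d
      = \<eta> * c * L\<^sup>2 * d - \<eta> * (2 * \<eta> * (\<Theta> + \<Theta>h)) / \<kappa> * d"
    using \<open>\<kappa> > 0\<close> by (simp add: field_simps)
  ultimately show ?thesis
    using descent variance unfolding a_def [symmetric] b_def [symmetric] d_def [symmetric] K_def
    by (simp add: algebra_simps)
qed

section \<open>Square-integrable random vectors\<close>

definition sq_integrable :: "'a measure \<Rightarrow> ('a \<Rightarrow> 'b::real_normed_vector) \<Rightarrow> bool" where
  "sq_integrable M f \<longleftrightarrow> f \<in> borel_measurable M \<and> integrable M (\<lambda>\<omega>. (norm (f \<omega>))\<^sup>2)"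

lemma sq_integrableI:
  assumes "f \<in> borel_measurable M" "integrable M (\<lambda>\<omega>. (norm (f \<omega>))\<^sup>2)"
  shows "sq_integrable M f"
  using assms unfolding sq_integrable_def ..

lemma sq_integrableD:
  assumes "sq_integrable M f"
  shows "f \<in> borel_measurable M" "integrable M (\<lambda>\<omega>. (norm (f \<omega>))\<^sup>2)"
  using assms unfolding sq_integrable_def by auto

lemma sq_integrable_norm_le:
  assumes f: "sq_integrable M f" and g: "g \<in> borel_measurable M"
    and le: "\<And>\<omega>. \<omega> \<in> space M \<Longrightarrow> norm (g \<omega>) \<le> C * norm (f \<omega>)"
  shows "sq_integrable M g"
proof (rule sq_integrableI[OF g])
  have bound: "norm ((norm (g \<omega>))\<^sup>2) \<le> norm (C\<^sup>2 * (norm (f \<omega>))\<^sup>2)" if "\<omega> \<in> space M" for \<omega>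
    using power_mono[OF le[OF that] norm_ge_zero, where n = 2] by (simp add: power_mult_distrib)
  have "integrable M (\<lambda>\<omega>. C\<^sup>2 * (norm (f \<omega>))\<^sup>2)"
    using sq_integrableD(2)[OF f] by simp
  then show "integrable M (\<lambda>\<omega>. (norm (g \<omega>))\<^sup>2)"
    by (rule Bochner_Integration.integrable_bound) (use g bound in \<open>auto intro: AE_I2\<close>)
qed

lemma sq_integrable_const:
  "finite_measure M \<Longrightarrow> sq_integrable M (\<lambda>_. c)"
  by (simp add: sq_integrable_def finite_measure.integrable_const)

lemma sq_integrable_scaleR:
  assumes "sq_integrable M f"
  shows "sq_integrable M (\<lambda>\<omega>. r *\<^sub>R f \<omega>)"
proof (rule sq_integrable_norm_le[OF assms, where C = "\<bar>r\<bar>"])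
  show "(\<lambda>\<omega>. r *\<^sub>R f \<omega>) \<in> borel_measurable M"
    using sq_integrableD(1)[OF assms] by measurable
qed simp

lemma sq_integrable_add:
  fixes f g :: "'a \<Rightarrow> 'b::{real_normed_vector, second_countable_topology}"
  assumes f: "sq_integrable M f" and g: "sq_integrable M g"
  shows "sq_integrable M (\<lambda>\<omega>. f \<omega> + g \<omega>)"
proof (rule sq_integrableI)
  show meas: "(\<lambda>\<omega>. f \<omega> + g \<omega>) \<in> borel_measurable M"
    using sq_integrableD(1)[OF f] sq_integrableD(1)[OF g] by measurable
  have bound: "norm ((norm (f \<omega> + g \<omega>))\<^sup>2) \<le> norm (2 * (norm (f \<omega>))\<^sup>2 + 2 * (norm (g \<omega>))\<^sup>2)" for \<omega>
    using norm_add_sq_le[of "f \<omega>" "g \<omega>"] by simp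
  have "integrable M (\<lambda>\<omega>. 2 * (norm (f \<omega>))\<^sup>2 + 2 * (norm (g \<omega>))\<^sup>2)"
    using sq_integrableD(2)[OF f] sq_integrableD(2)[OF g] by simp
  then show "integrable M (\<lambda>\<omega>. (norm (f \<omega> + g \<omega>))\<^sup>2)"
    by (rule Bochner_Integration.integrable_bound) (use meas bound in \<open>auto intro: AE_I2\<close>)
qed

lemma sq_integrable_diff:
  fixes f g :: "'a \<Rightarrow> 'b::{real_normed_vector, second_countable_topology}"
  assumes "sq_integrable M f" "sq_integrable M g"
  shows "sq_integrable M (\<lambda>\<omega>. f \<omega> - g \<omega>)"
  using sq_integrable_add[OF assms(1) sq_integrable_scaleR[OF assms(2), of "-1"]] by simp

lemma sq_integrable_inner_right:
  fixes f :: "'a \<Rightarrow> 'v::{real_inner, second_countable_topology}"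
  assumes "sq_integrable M f"
  shows "sq_integrable M (\<lambda>\<omega>. inner (f \<omega>) b)"
proof (rule sq_integrable_norm_le[OF assms, where C = "norm b"])
  show "(\<lambda>\<omega>. inner (f \<omega>) b) \<in> borel_measurable M"
    using sq_integrableD(1)[OF assms] by measurable
qed (use Cauchy_Schwarz_ineq2[of "f _" b] in \<open>simp add: mult.commute\<close>)

lemma integrable_inner_sq_integrable:
  fixes f g :: "'a \<Rightarrow> 'v::{real_inner, second_countable_topology}"
  assumes f: "sq_integrable M f" and g: "sq_integrable M g"
  shows "integrable M (\<lambda>\<omega>. inner (f \<omega>) (g \<omega>))"
proof -
  have bound: "norm (inner (f \<omega>) (g \<omega>)) \<le> norm ((norm (f \<omega>))\<^sup>2 + (norm (g \<omega>))\<^sup>2)" for \<omega>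
  proof -
    have "\<bar>inner (f \<omega>) (g \<omega>)\<bar> \<le> norm (f \<omega>) * norm (g \<omega>)"
      by (rule Cauchy_Schwarz_ineq2)
    also have "\<dots> \<le> (norm (f \<omega>))\<^sup>2 + (norm (g \<omega>))\<^sup>2"
    proof -
      have "0 \<le> (norm (f \<omega>) - norm (g \<omega>))\<^sup>2" and "0 \<le> norm (f \<omega>) * norm (g \<omega>)"
        by simp_all
      then show ?thesis
        unfolding power2_diff by linarith
    qed
    finally show ?thesis by simp
  qed
  have meas: "(\<lambda>\<omega>. inner (f \<omega>) (g \<omega>)) \<in> borel_measurable M"
    using sq_integrableD(1)[OF f] sq_integrableD(1)[OF g] by measurable
  have "integrable M (\<lambda>\<omega>. (norm (f \<omega>))\<^sup>2 + (norm (g \<omega>))\<^sup>2)"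
    using sq_integrableD(2)[OF f] sq_integrableD(2)[OF g] by (rule Bochner_Integration.integrable_add)
  then show ?thesis
    by (rule Bochner_Integration.integrable_bound) (use meas bound in \<open>auto intro: AE_I2\<close>)
qed

lemma lipschitz_on_UNIV_borel_measurable:
  fixes G :: "'a::{real_normed_vector, second_countable_topology} \<Rightarrow> 'b::real_normed_vector"
  assumes "C-lipschitz_on UNIV G"
  shows "G \<in> borel_measurable borel"
  using lipschitz_on_continuous_on[OF assms] by (rule borel_measurable_continuous_onI)

lemma sq_integrable_lipschitz_comp:
  fixes G :: "'a::euclidean_space \<Rightarrow> 'b::euclidean_space"
  assumes "finite_measure M" and G: "C-lipschitz_on UNIV G" and f: "sq_integrable M f"
  shows "sq_integrable M (\<lambda>\<omega>. G (f \<omega>))"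
proof -
  have [measurable]: "G \<in> borel_measurable borel" "f \<in> borel_measurable M"
    using lipschitz_on_UNIV_borel_measurable[OF G] sq_integrableD[OF f] by auto
  have "sq_integrable M (\<lambda>\<omega>. G (f \<omega>) - G 0)"
  proof (rule sq_integrable_norm_le[OF f])
    show "norm (G (f \<omega>) - G 0) \<le> C * norm (f \<omega>)" for \<omega>
      using lipschitz_onD[OF G, of "f \<omega>" 0] by (simp add: dist_norm)
  qed measurable
  from sq_integrable_add[OF this sq_integrable_const[OF \<open>finite_measure M\<close>, of "G 0"]]
  show ?thesis by simp
qed

section \<open>Conditional expectations of squared distances\<close>

lemma (in sigma_finite_subalgebra) real_cond_exp_inner_unbiased:
  fixes u e :: "'a \<Rightarrow> 'v::euclidean_space"
  assumes u: "sq_integrable M u" "u \<in> borel_measurable F" and e: "sq_integrable M e"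
    and unbiased: "\<And>b. b \<in> Basis \<Longrightarrow> AE \<omega> in M. real_cond_exp M F (\<lambda>\<omega>. inner (e \<omega>) b) \<omega> = 0"
  shows "AE \<omega> in M. real_cond_exp M F (\<lambda>\<omega>. inner (u \<omega>) (e \<omega>)) \<omega> = 0"
proof -
  \<comment> \<open>unbiasedness is only assumed coordinatewise, so expand the inner product in the basis\<close>
  define h where "h b \<omega> = inner (u \<omega>) b * inner (e \<omega>) b" for b \<omega>
  have h_int: "integrable M (h b)" for b
    using integrable_inner_sq_integrable[OF sq_integrable_inner_right[OF u(1)] sq_integrable_inner_right[OF e]]
    unfolding h_def by simp
  have "AE \<omega> in M. real_cond_exp M F (\<lambda>\<omega>. \<Sum>b\<in>Basis. h b \<omega>) \<omega> = (\<Sum>b\<in>Basis. real_cond_exp M F (h b) \<omega>)"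
    using h_int by (rule real_cond_exp_sum)
  moreover have "AE \<omega> in M. \<forall>b\<in>Basis. real_cond_exp M F (h b) \<omega> = 0"
  proof (rule AE_ball_countable')
    fix b :: 'v assume b: "b \<in> Basis"
    have "AE \<omega> in M. real_cond_exp M F (h b) \<omega> = inner (u \<omega>) b * real_cond_exp M F (\<lambda>\<omega>. inner (e \<omega>) b) \<omega>"
      using h_int[of b] u(2) sq_integrableD(1)[OF e] unfolding h_def
      by (intro real_cond_exp_mult) auto
    with unbiased[OF b] show "AE \<omega> in M. real_cond_exp M F (h b) \<omega> = 0"
      by eventually_elim simp
  qed (simp add: countable_finite)
  moreover have "inner (u \<omega>) (e \<omega>) = (\<Sum>b\<in>Basis. h b \<omega>)" for \<omega>
    unfolding h_def by (rule euclidean_inner)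
  ultimately show ?thesis
    by (auto elim!: AE_mp)
qed

lemma (in sigma_finite_subalgebra) real_cond_exp_norm_sq_diff_unbiased:
  fixes u e :: "'a \<Rightarrow> 'v::euclidean_space"
  assumes u: "sq_integrable M u" "u \<in> borel_measurable F" and e: "sq_integrable M e"
    and unbiased: "\<And>b. b \<in> Basis \<Longrightarrow> AE \<omega> in M. real_cond_exp M F (\<lambda>\<omega>. inner (e \<omega>) b) \<omega> = 0"
  shows "AE \<omega> in M. real_cond_exp M F (\<lambda>\<omega>. (norm (u \<omega> - \<eta> *\<^sub>R e \<omega>))\<^sup>2) \<omega>
    = (norm (u \<omega>))\<^sup>2 + \<eta>\<^sup>2 * real_cond_exp M F (\<lambda>\<omega>. (norm (e \<omega>))\<^sup>2) \<omega>"
proof -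
  define U I E where "U = (\<lambda>\<omega>. (norm (u \<omega>))\<^sup>2)" and "I = (\<lambda>\<omega>. inner (u \<omega>) (e \<omega>))"
    and "E = (\<lambda>\<omega>. (norm (e \<omega>))\<^sup>2)"
  have expand: "(\<lambda>\<omega>. (norm (u \<omega> - \<eta> *\<^sub>R e \<omega>))\<^sup>2) = (\<lambda>\<omega>. U \<omega> + ((- 2 * \<eta>) * I \<omega> + \<eta>\<^sup>2 * E \<omega>))"
    unfolding U_def I_def E_def power2_norm_eq_inner
    by (simp add: inner_diff_left inner_diff_right inner_commute algebra_simps power2_eq_square)
  have U: "integrable M U" and I: "integrable M I" and E: "integrable M E"
    using u e unfolding U_def I_def E_def by (simp_all add: sq_integrable_def integrable_inner_sq_integrable)
  have "AE \<omega> in M. real_cond_exp M F (\<lambda>\<omega>. U \<omega> + ((- 2 * \<eta>) * I \<omega> + \<eta>\<^sup>2 * E \<omega>)) \<omega>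
      = real_cond_exp M F U \<omega> + real_cond_exp M F (\<lambda>\<omega>. (- 2 * \<eta>) * I \<omega> + \<eta>\<^sup>2 * E \<omega>) \<omega>"
    using U I E by (intro real_cond_exp_add) auto
  moreover have "AE \<omega> in M. real_cond_exp M F (\<lambda>\<omega>. (- 2 * \<eta>) * I \<omega> + \<eta>\<^sup>2 * E \<omega>) \<omega>
      = real_cond_exp M F (\<lambda>\<omega>. (- 2 * \<eta>) * I \<omega>) \<omega> + real_cond_exp M F (\<lambda>\<omega>. \<eta>\<^sup>2 * E \<omega>) \<omega>"
    using I E by (intro real_cond_exp_add) auto
  moreover have "AE \<omega> in M. real_cond_exp M F U \<omega> = U \<omega>"
    using U u(2) unfolding U_def by (intro real_cond_exp_F_meas) auto
  moreover have "AE \<omega> in M. real_cond_exp M F (\<lambda>\<omega>. (- 2 * \<eta>) * I \<omega>) \<omega> = (- 2 * \<eta>) * real_cond_exp M F I \<omega>"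
    using I by (rule real_cond_exp_cmult)
  moreover have "AE \<omega> in M. real_cond_exp M F I \<omega> = 0"
    unfolding I_def using u e unbiased by (rule real_cond_exp_inner_unbiased)
  moreover have "AE \<omega> in M. real_cond_exp M F (\<lambda>\<omega>. \<eta>\<^sup>2 * E \<omega>) \<omega> = \<eta>\<^sup>2 * real_cond_exp M F E \<omega>"
    using E by (rule real_cond_exp_cmult)
  ultimately show ?thesis
    unfolding expand by eventually_elim (simp add: U_def E_def)
qed

lemma (in sigma_finite_subalgebra) real_cond_exp_lyapunov_sum:
  fixes u1 u2 e :: "'a \<Rightarrow> 'v::euclidean_space"
  assumes u1: "sq_integrable M u1" "u1 \<in> borel_measurable F"
    and u2: "sq_integrable M u2" "u2 \<in> borel_measurable F"
    and e: "sq_integrable M e"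
    and unbiased: "\<And>b. b \<in> Basis \<Longrightarrow> AE \<omega> in M. real_cond_exp M F (\<lambda>\<omega>. inner (e \<omega>) b) \<omega> = 0"
    and D: "integrable M D" and h: "integrable M h" "h \<in> borel_measurable F"
  defines "V \<equiv> real_cond_exp M F (\<lambda>\<omega>. (norm (e \<omega>))\<^sup>2)"
  shows "AE \<omega> in M. real_cond_exp M F
      (\<lambda>\<omega>. (norm (u1 \<omega> - \<eta> *\<^sub>R e \<omega>))\<^sup>2 + \<alpha> * (norm (u2 \<omega> - \<eta> *\<^sub>R e \<omega>))\<^sup>2 + \<beta> * D \<omega> + h \<omega>) \<omega>
    = (norm (u1 \<omega>))\<^sup>2 + \<eta>\<^sup>2 * V \<omega> + \<alpha> * ((norm (u2 \<omega>))\<^sup>2 + \<eta>\<^sup>2 * V \<omega>)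
      + \<beta> * real_cond_exp M F D \<omega> + h \<omega>"
proof -
  define N1 N2 where "N1 \<omega> = (norm (u1 \<omega> - \<eta> *\<^sub>R e \<omega>))\<^sup>2" and "N2 \<omega> = (norm (u2 \<omega> - \<eta> *\<^sub>R e \<omega>))\<^sup>2"
    for \<omega>
  have N1: "integrable M N1" and N2: "integrable M N2"
    using sq_integrable_diff[OF u1(1) sq_integrable_scaleR[OF e]]
      sq_integrable_diff[OF u2(1) sq_integrable_scaleR[OF e]]
    unfolding N1_def N2_def sq_integrable_def by auto
  have "AE \<omega> in M. real_cond_exp M F (\<lambda>\<omega>. N1 \<omega> + \<alpha> * N2 \<omega> + \<beta> * D \<omega> + h \<omega>) \<omega>
      = real_cond_exp M F N1 \<omega> + real_cond_exp M F (\<lambda>\<omega>. \<alpha> * N2 \<omega>) \<omega>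
        + real_cond_exp M F (\<lambda>\<omega>. \<beta> * D \<omega>) \<omega> + real_cond_exp M F h \<omega>"
  proof -
    have "AE \<omega> in M. real_cond_exp M F (\<lambda>\<omega>. (N1 \<omega> + \<alpha> * N2 \<omega> + \<beta> * D \<omega>) + h \<omega>) \<omega>
        = real_cond_exp M F (\<lambda>\<omega>. N1 \<omega> + \<alpha> * N2 \<omega> + \<beta> * D \<omega>) \<omega> + real_cond_exp M F h \<omega>"
      using N1 N2 D h by (intro real_cond_exp_add) auto
    moreover have "AE \<omega> in M. real_cond_exp M F (\<lambda>\<omega>. (N1 \<omega> + \<alpha> * N2 \<omega>) + \<beta> * D \<omega>) \<omega>
        = real_cond_exp M F (\<lambda>\<omega>. N1 \<omega> + \<alpha> * N2 \<omega>) \<omega> + real_cond_exp M F (\<lambda>\<omega>. \<beta> * D \<omega>) \<omega>"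
      using N1 N2 D by (intro real_cond_exp_add) auto
    moreover have "AE \<omega> in M. real_cond_exp M F (\<lambda>\<omega>. N1 \<omega> + \<alpha> * N2 \<omega>) \<omega>
        = real_cond_exp M F N1 \<omega> + real_cond_exp M F (\<lambda>\<omega>. \<alpha> * N2 \<omega>) \<omega>"
      using N1 N2 by (intro real_cond_exp_add) auto
    ultimately show ?thesis
      by eventually_elim simp
  qed
  moreover have "AE \<omega> in M. real_cond_exp M F N1 \<omega> = (norm (u1 \<omega>))\<^sup>2 + \<eta>\<^sup>2 * V \<omega>"
    unfolding N1_def V_def using u1 e unbiased by (rule real_cond_exp_norm_sq_diff_unbiased)
  moreover have "AE \<omega> in M. real_cond_exp M F N2 \<omega> = (norm (u2 \<omega>))\<^sup>2 + \<eta>\<^sup>2 * V \<omega>"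
    unfolding N2_def V_def using u2 e unbiased by (rule real_cond_exp_norm_sq_diff_unbiased)
  moreover have "AE \<omega> in M. real_cond_exp M F (\<lambda>\<omega>. \<alpha> * N2 \<omega>) \<omega> = \<alpha> * real_cond_exp M F N2 \<omega>"
    using N2 by (rule real_cond_exp_cmult)
  moreover have "AE \<omega> in M. real_cond_exp M F (\<lambda>\<omega>. \<beta> * D \<omega>) \<omega> = \<beta> * real_cond_exp M F D \<omega>"
    using D by (rule real_cond_exp_cmult)
  moreover have "AE \<omega> in M. real_cond_exp M F h \<omega> = h \<omega>"
    using h by (rule real_cond_exp_F_meas)
  ultimately show ?thesis
    unfolding N1_def N2_def by eventually_elim simp
qed

section \<open>One step of the scheme\<close>

lemma subalg_filtration_sigma_finite_subalgebra:
  assumes "prob_space M" "subalg_filtration M F"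
  shows "sigma_finite_subalgebra M (F k)"
proof -
  interpret prob_space M by (rule assms(1))
  show ?thesis
    using assms(2) unfolding subalg_filtration_def
    by (intro finite_measure_subalgebra_is_sigma_finite finite_measure_subalgebra.intro
        finite_measure_subalgebra_axioms.intro finite_measure_axioms) auto
qed

lemma Pk_Suc_eq:
  fixes G :: "'v::euclidean_space \<Rightarrow> 'v"
  assumes "\<eta> \<noteq> 0" and xi: "\<xi> (Suc k) \<omega> = (1 / \<eta>) *\<^sub>R (x k \<omega> - \<eta> *\<^sub>R St k \<omega> - x (Suc k) \<omega>)"
  defines "g \<equiv> G (x k \<omega>) - G (x (k - 1) \<omega>)"
    and "e \<equiv> St k \<omega> - (2 *\<^sub>R G (x k \<omega>) - G (x (k - 1) \<omega>))"
  shows "Pk G \<eta> \<gamma> \<kappa> \<Theta>h xs x \<xi> \<Delta> (Suc k) \<omega>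
    = (norm ((x k \<omega> - \<eta> *\<^sub>R g - xs) - \<eta> *\<^sub>R e))\<^sup>2 + (1 - \<gamma> * \<eta>) * (norm (- \<eta> *\<^sub>R g - \<eta> *\<^sub>R e))\<^sup>2
      + 2 * \<eta>\<^sup>2 * (1 - \<kappa>) / \<kappa> * \<Delta> k \<omega> + 2 * \<eta>\<^sup>2 * \<Theta>h / \<kappa> * (norm (x k \<omega> - x (k - 1) \<omega>))\<^sup>2"
proof -
  have y: "yseq G \<eta> x \<xi> (Suc k) \<omega> = x k \<omega> - \<eta> *\<^sub>R g - \<eta> *\<^sub>R e"
    unfolding yseq_def xi g_def e_def using \<open>\<eta> \<noteq> 0\<close> by (simp add: algebra_simps scaleR_2)
  have y_xs: "yseq G \<eta> x \<xi> (Suc k) \<omega> - xs = (x k \<omega> - \<eta> *\<^sub>R g - xs) - \<eta> *\<^sub>R e"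
    and y_x: "yseq G \<eta> x \<xi> (Suc k) \<omega> - x k \<omega> = - \<eta> *\<^sub>R g - \<eta> *\<^sub>R e"
    unfolding y by (simp_all add: algebra_simps)
  show ?thesis
    unfolding Pk_def Dprev_def diff_Suc_1 y_xs y_x by simp
qed

lemma (in sigma_finite_subalgebra) real_cond_exp_Pk_Suc:
  fixes x \<xi> St :: "nat \<Rightarrow> 'a \<Rightarrow> 'v::euclidean_space"
  assumes "finite_measure M" and lip: "C-lipschitz_on UNIV G" and "\<eta> \<noteq> 0"
    and xi: "\<And>\<omega>. \<omega> \<in> space M \<Longrightarrow> \<xi> (Suc k) \<omega> = (1 / \<eta>) *\<^sub>R (x k \<omega> - \<eta> *\<^sub>R St k \<omega> - x (Suc k) \<omega>)"
    and x_F: "x k \<in> borel_measurable F" "x (k - 1) \<in> borel_measurable F"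
    and x_sq: "sq_integrable M (x k)" "sq_integrable M (x (k - 1))" and St_sq: "sq_integrable M (St k)"
    and unbiased: "\<And>b. b \<in> Basis \<Longrightarrow> AE \<omega> in M. real_cond_exp M F
      (\<lambda>\<omega>. inner (St k \<omega> - (2 *\<^sub>R G (x k \<omega>) - G (x (k - 1) \<omega>))) b) \<omega> = 0"
    and \<Delta>: "integrable M (\<Delta> k)"
  defines "V \<equiv> real_cond_exp M F (\<lambda>\<omega>. (norm (St k \<omega> - (2 *\<^sub>R G (x k \<omega>) - G (x (k - 1) \<omega>))))\<^sup>2)"
  shows "AE \<omega> in M. real_cond_exp M F (Pk G \<eta> \<gamma> \<kappa> \<Theta>h xs x \<xi> \<Delta> (Suc k)) \<omega>
    = (norm (x k \<omega> - \<eta> *\<^sub>R (G (x k \<omega>) - G (x (k - 1) \<omega>)) - xs))\<^sup>2 + \<eta>\<^sup>2 * V \<omega>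
      + (1 - \<gamma> * \<eta>) * ((norm (\<eta> *\<^sub>R (G (x k \<omega>) - G (x (k - 1) \<omega>))))\<^sup>2 + \<eta>\<^sup>2 * V \<omega>)
      + 2 * \<eta>\<^sup>2 * (1 - \<kappa>) / \<kappa> * real_cond_exp M F (\<Delta> k) \<omega>
      + 2 * \<eta>\<^sup>2 * \<Theta>h / \<kappa> * (norm (x k \<omega> - x (k - 1) \<omega>))\<^sup>2"
proof -
  define g e where "g \<omega> = G (x k \<omega>) - G (x (k - 1) \<omega>)"
    and "e \<omega> = St k \<omega> - (2 *\<^sub>R G (x k \<omega>) - G (x (k - 1) \<omega>))" for \<omega>
  define Q where "Q \<omega> = (norm ((x k \<omega> - \<eta> *\<^sub>R g \<omega> - xs) - \<eta> *\<^sub>R e \<omega>))\<^sup>2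
      + (1 - \<gamma> * \<eta>) * (norm (- \<eta> *\<^sub>R g \<omega> - \<eta> *\<^sub>R e \<omega>))\<^sup>2
      + 2 * \<eta>\<^sup>2 * (1 - \<kappa>) / \<kappa> * \<Delta> k \<omega> + 2 * \<eta>\<^sup>2 * \<Theta>h / \<kappa> * (norm (x k \<omega> - x (k - 1) \<omega>))\<^sup>2" for \<omega>
  have Pk_Q: "Pk G \<eta> \<gamma> \<kappa> \<Theta>h xs x \<xi> \<Delta> (Suc k) \<omega> = Q \<omega>" if "\<omega> \<in> space M" for \<omega>
    unfolding Q_def g_def e_def
    using Pk_Suc_eq[where x = x and \<xi> = \<xi> and St = St, OF \<open>\<eta> \<noteq> 0\<close> xi[OF that]] .
  note [measurable] = lipschitz_on_UNIV_borel_measurable[OF lip] x_F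
    measurable_from_subalg[OF subalg x_F(1)] measurable_from_subalg[OF subalg x_F(2)]
    sq_integrableD(1)[OF St_sq] borel_measurable_integrable[OF \<Delta>]
  have Gx_sq: "sq_integrable M (\<lambda>\<omega>. G (x k \<omega>))" "sq_integrable M (\<lambda>\<omega>. G (x (k - 1) \<omega>))"
    using sq_integrable_lipschitz_comp[OF \<open>finite_measure M\<close> lip] x_sq by auto
  have Q_M: "Q \<in> borel_measurable M"
    unfolding Q_def g_def e_def by measurable
  have "AE \<omega> in M. real_cond_exp M F (Pk G \<eta> \<gamma> \<kappa> \<Theta>h xs x \<xi> \<Delta> (Suc k)) \<omega> = real_cond_exp M F Q \<omega>"
    using Pk_Q Q_M by (intro real_cond_exp_cong AE_I2) (auto cong: measurable_cong)
  moreover have "AE \<omega> in M. real_cond_exp M F Q \<omega>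
      = (norm (x k \<omega> - \<eta> *\<^sub>R g \<omega> - xs))\<^sup>2 + \<eta>\<^sup>2 * V \<omega>
        + (1 - \<gamma> * \<eta>) * ((norm (- \<eta> *\<^sub>R g \<omega>))\<^sup>2 + \<eta>\<^sup>2 * V \<omega>)
        + 2 * \<eta>\<^sup>2 * (1 - \<kappa>) / \<kappa> * real_cond_exp M F (\<Delta> k) \<omega>
        + 2 * \<eta>\<^sup>2 * \<Theta>h / \<kappa> * (norm (x k \<omega> - x (k - 1) \<omega>))\<^sup>2"
    unfolding Q_def V_def e_def[symmetric]
  proof (rule real_cond_exp_lyapunov_sum)
    have g_sq: "sq_integrable M g"
      unfolding g_def by (intro sq_integrable_diff Gx_sq)
    show "sq_integrable M (\<lambda>\<omega>. x k \<omega> - \<eta> *\<^sub>R g \<omega> - xs)"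
      by (intro sq_integrable_diff sq_integrable_scaleR x_sq g_sq sq_integrable_const[OF \<open>finite_measure M\<close>])
    show "sq_integrable M (\<lambda>\<omega>. - \<eta> *\<^sub>R g \<omega>)"
      by (intro sq_integrable_scaleR g_sq)
    show "sq_integrable M e"
      unfolding e_def by (intro sq_integrable_diff sq_integrable_scaleR St_sq Gx_sq)
    show "integrable M (\<lambda>\<omega>. 2 * \<eta>\<^sup>2 * \<Theta>h / \<kappa> * (norm (x k \<omega> - x (k - 1) \<omega>))\<^sup>2)"
      using sq_integrable_diff[OF x_sq] by (simp add: sq_integrable_def)
  qed (use \<Delta> unbiased in \<open>unfold g_def e_def, measurable\<close>)
  ultimately show ?thesis
    unfolding g_def by eventually_elim simp
qed

theorem mainTheorem4:
  fixes M :: "'a measure" and F :: "nat \<Rightarrow> 'a measure"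
    and G :: "'v::euclidean_space \<Rightarrow> 'v" and T :: "'v \<Rightarrow> 'v set"
    and P :: "'z measure" and Gz :: "'v \<Rightarrow> 'z \<Rightarrow> 'v"
    and n :: nat and Gi :: "nat \<Rightarrow> 'v \<Rightarrow> 'v"
    and L \<rho> \<eta> \<gamma> \<kappa> \<Theta> \<Theta>h :: real and xs :: 'v
    and x \<xi> St :: "nat \<Rightarrow> 'a \<Rightarrow> 'v"
    and \<Delta> :: "nat \<Rightarrow> 'a \<Rightarrow> real" and \<delta> :: "nat \<Rightarrow> real"
  assumes prob: "prob_space M"
    and filt: "subalg_filtration M F"
    \<comment> \<open>Assumption A(c), in setting (E) or in setting (F)\<close>
    and Ac: "assmAc_E P Gz G L \<or> assmAc_F n Gi G L"
    \<comment> \<open>Assumption A(d)\<close>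
    and Ad: "weak_minty G T \<rho> xs"
    \<comment> \<open>the scheme (VrFRBS)\<close>
    and eta: "\<eta> > 0"
    and xi0: "\<And>\<omega>. \<omega> \<in> space M \<Longrightarrow> \<xi> 0 \<omega> \<in> T (x 0 \<omega>)"
    and xi_def: "\<And>k \<omega>. \<omega> \<in> space M \<Longrightarrow>
                   \<xi> (Suc k) \<omega> = (1 / \<eta>) *\<^sub>R (x k \<omega> - \<eta> *\<^sub>R St k \<omega> - x (Suc k) \<omega>)"
    and resolvent: "\<And>k \<omega>. \<omega> \<in> space M \<Longrightarrow> \<xi> (Suc k) \<omega> \<in> T (x (Suc k) \<omega>)"
    \<comment> \<open>adaptedness and integrability\<close>
    and x_meas: "\<And>j k. j \<le> k \<Longrightarrow> x j \<in> borel_measurable (F k)"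
    and xi_meas: "\<And>j k. j \<le> k \<Longrightarrow> \<xi> j \<in> borel_measurable (F k)"
    and St_meas: "\<And>k. St k \<in> borel_measurable M"
    and x_int: "\<And>k. integrable M (\<lambda>\<omega>. (norm (x k \<omega>))\<^sup>2)"
    and xi_int: "\<And>k. integrable M (\<lambda>\<omega>. (norm (\<xi> k \<omega>))\<^sup>2)"
    and St_int: "\<And>k. integrable M (\<lambda>\<omega>. (norm (St k \<omega>))\<^sup>2)"
    \<comment> \<open>class (U)\<close>
    and Delta_meas: "\<And>k. \<Delta> k \<in> borel_measurable M"
    and Delta_int: "\<And>k. integrable M (\<Delta> k)"
    and Delta_nonneg: "\<And>k \<omega>. \<omega> \<in> space M \<Longrightarrow> \<Delta> k \<omega> \<ge> 0"
    and kappa: "0 < \<kappa>" "\<kappa> \<le> 1"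
    and Theta: "\<Theta> \<ge> 0" "\<Theta>h \<ge> 0"
    and delta: "\<And>k. \<delta> k \<ge> 0"
    and unbiased: "\<And>k b. b \<in> Basis \<Longrightarrow>
        AE \<omega> in M. real_cond_exp M (F k)
          (\<lambda>\<omega>. inner (St k \<omega> - (2 *\<^sub>R G (x k \<omega>) - G (x (k - 1) \<omega>))) b) \<omega> = 0"
    and var_bound: "\<And>k. AE \<omega> in M.
        real_cond_exp M (F k) (\<lambda>\<omega>. (norm (St k \<omega> - (2 *\<^sub>R G (x k \<omega>) - G (x (k - 1) \<omega>))))\<^sup>2) \<omega>
          \<le> real_cond_exp M (F k) (\<Delta> k) \<omega>"
    and Delta_rec: "\<And>k. AE \<omega> in M.
        real_cond_exp M (F k) (\<Delta> k) \<omega>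
          \<le> (1 - \<kappa>) * Dprev \<Delta> k \<omega> + \<Theta> * (norm (x k \<omega> - x (k - 1) \<omega>))\<^sup>2
            + \<Theta>h * (norm (x (k - 1) \<omega> - x (k - 2) \<omega>))\<^sup>2 + \<delta> k"
    and gamma: "\<gamma> > 0"
  shows "\<forall>c>0. \<forall>k. AE \<omega> in M.
    real_cond_exp M (F k) (Pk G \<eta> \<gamma> \<kappa> \<Theta>h xs x \<xi> \<Delta> (Suc k)) \<omega>
      \<le> Pk G \<eta> \<gamma> \<kappa> \<Theta>h xs x \<xi> \<Delta> k \<omega>
        - (1 - 4 * \<rho> / \<eta> - 2 * L\<^sup>2 * \<eta> * (4 * \<rho> + 1 / \<gamma> + c))
            * (norm (yseq G \<eta> x \<xi> k \<omega> - x k \<omega>))\<^sup>2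
        - (1 - \<gamma> * \<eta> - 2 * L\<^sup>2 * \<eta> * (4 * \<rho> + 1 / \<gamma> + c))
            * (norm (yseq G \<eta> x \<xi> k \<omega> - x (k - 1) \<omega>))\<^sup>2
        - \<eta> * (c * \<kappa> * L\<^sup>2 - 2 * \<eta> * (\<Theta> + \<Theta>h)) / \<kappa> * (norm (x k \<omega> - x (k - 1) \<omega>))\<^sup>2
        + 2 * \<eta>\<^sup>2 * \<delta> k / \<kappa>"
proof (intro allI impI, goal_cases)
  case (1 c k)
  interpret prob_space M by (rule prob)
  interpret S: sigma_finite_subalgebra M "F k"
    using prob filt by (rule subalg_filtration_sigma_finite_subalgebra)
  have lip: "\<bar>L\<bar>-lipschitz_on UNIV G"
    using Ac assmAc_E_lipschitz assmAc_F_lipschitz by blast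
  have "\<eta> \<noteq> 0"
    using eta by simp
  have x_sq: "sq_integrable M (x j)" for j
    using filt x_meas[OF order_refl] x_int measurable_from_subalg
    unfolding subalg_filtration_def sq_integrable_def by blast
  note [measurable] = lipschitz_on_UNIV_borel_measurable[OF lip] St_meas sq_integrableD(1)[OF x_sq]
  let ?V = "real_cond_exp M (F k) (\<lambda>\<omega>. (norm (St k \<omega> - (2 *\<^sub>R G (x k \<omega>) - G (x (k - 1) \<omega>))))\<^sup>2)"
  have "AE \<omega> in M. 0 \<le> ?V \<omega>"
    by (rule S.real_cond_exp_pos) auto
  moreover note var_bound[of k] Delta_rec[of k] AE_space
  moreover have "AE \<omega> in M. real_cond_exp M (F k) (Pk G \<eta> \<gamma> \<kappa> \<Theta>h xs x \<xi> \<Delta> (Suc k)) \<omega>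
      = (norm (x k \<omega> - \<eta> *\<^sub>R (G (x k \<omega>) - G (x (k - 1) \<omega>)) - xs))\<^sup>2 + \<eta>\<^sup>2 * ?V \<omega>
        + (1 - \<gamma> * \<eta>) * ((norm (\<eta> *\<^sub>R (G (x k \<omega>) - G (x (k - 1) \<omega>))))\<^sup>2 + \<eta>\<^sup>2 * ?V \<omega>)
        + 2 * \<eta>\<^sup>2 * (1 - \<kappa>) / \<kappa> * real_cond_exp M (F k) (\<Delta> k) \<omega>
        + 2 * \<eta>\<^sup>2 * \<Theta>h / \<kappa> * (norm (x k \<omega> - x (k - 1) \<omega>))\<^sup>2"
    using finite_measure_axioms lip \<open>\<eta> \<noteq> 0\<close> xi_def x_meas x_sq sq_integrableI[OF St_meas St_int]
      unbiased Delta_int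
    by (intro S.real_cond_exp_Pk_Suc) auto
  ultimately show ?case
  proof eventually_elim
    case (elim \<omega>)
    have "\<xi> k \<omega> \<in> T (x k \<omega>)"
      using elim xi0 resolvent by (cases k) auto
    from forward_reflected_lyapunov_decrease[OF Ad this lip yseq_def[of G \<eta> x \<xi> k \<omega>] elim(1-3)] elim(5)
    show ?case
      using eta gamma \<open>c > 0\<close> kappa by (simp add: Pk_def)
  qed
qed

end
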